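(* Let $G=(V,E)$ be a connected undirected graph with positive edge weights $w$, and run the distributed algorithm described in the context synchronously at every node. Then for every node $v\in V$ and every node $t\in V$, at any time after the first $\mathcal{D}(G)+1$ phases have been completed, the variable $S[v,t]$ at $v$ equals $\sigma_{v,t}$.
   Context: Graph notions. $G=(V,E)$ is connected, undirected, with weights $w(e)>0$; $N(v)$ is the set of neighbors of $v$ and $N[v]=N(v)\cup\{v\}$. The length of a path is the sum of its edge weights; $\mathrm{dist}(s,t)$ is the length of a shortest $s$–$t$ path. For $s\neq t$, $\mathrm{maxhop}(s,t)$ is the maximum number of edges of a shortest (minimum-length) $s$–$t$ path, $\mathrm{maxhop}(s,s)=0$, and $\mathcal{D}(G)=\max_{s,t\in V}\mathrm{maxhop}(s,t)$. $\sigma_{s,t}$ is the number of shortest $s$–$t$ paths, with $\sigma_{s,s}=1$. Algorithm (at each node $v$). Initialization: for all $t\in V$: $D[t]=+\infty$, $\mathrm{NH}[t]=\mathrm{PH}[t]=\emptyset$, and for all $u\in N[v]$: $B[u,t]=0$, $S[u,t]=0$; then $S[v,v]=1$, $D[v]=0$. Execution proceeds in synchronous phases; in each phase every node $v$ sends, for every $t\in V$, the message $(t,D[t],S[v,t],B[v,t])$ to every neighbor, receives all messages sent to it by its neighbors in that phase, and processes each of them (in arbitrary order) as follows. On receipt of $(t,d,s,b)$ from $u\in N(v)$: remove $u$ from $\mathrm{NH}[t]$ and from $\mathrm{PH}[t]$; if $d+w(\{u,v\})<D[t]$ set $D[t]\leftarrow d+w(\{u,v\})$; else if $d+w(\{u,v\})=D[t]$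 add $u$ to $\mathrm{NH}[t]$; else if $d-w(\{u,v\})=D[t]$ add $u$ to $\mathrm{PH}[t]$. Then set $S[u,t]\leftarrow s$, $B[u,t]\leftarrow b$; if $t\neq v$ set $S[v,t]\leftarrow\sum_{x\in\mathrm{NH}[t]}S[x,t]$; set $B[v,t]\leftarrow S[v,t]\cdot\sum_{x\in\mathrm{PH}[t]}\frac{B[x,t]+1}{S[x,t]}$ (a term with $S[x,t]=0$ is taken as $0$); finally set $C\leftarrow\sum_{x\neq v}B[v,x]$. *)

theory Defs
  imports Complex_Main "HOL-Library.Extended_Real"
begin

definition nbrs :: "('a \<times> 'a) set \<Rightarrow> 'a \<Rightarrow> 'a set" where
  "nbrs E v = {u. (v, u) \<in> E}"

definition is_walk :: "'a set \<Rightarrow> ('a \<times> 'a) set \<Rightarrow> 'a list \<Rightarrow> bool" where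
  "is_walk V E xs \<longleftrightarrow> xs \<noteq> [] \<and> set xs \<subseteq> V \<and>
     (\<forall>i < length xs - 1. (xs ! i, xs ! Suc i) \<in> E)"

definition walk_len :: "('a \<Rightarrow> 'a \<Rightarrow> real) \<Rightarrow> 'a list \<Rightarrow> real" where
  "walk_len w xs = (\<Sum>i < length xs - 1. w (xs ! i) (xs ! Suc i))"

definition walks_between :: "'a set \<Rightarrow> ('a \<times> 'a) set \<Rightarrow> 'a \<Rightarrow> 'a \<Rightarrow> 'a list set" where
  "walks_between V E s t = {xs. is_walk V E xs \<and> hd xs = s \<and> last xs = t}"

text \<open>Shortest (minimum-length) s-t paths. With positive weights these are simple paths.\<close>
definition shortest_paths ::
  "'a set \<Rightarrow> ('a \<times> 'a) set \<Rightarrow> ('a \<Rightarrow> 'a \<Rightarrow> real) \<Rightarrow> 'a \<Rightarrow> 'a \<Rightarrow> 'a list set" where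
  "shortest_paths V E w s t =
     {xs \<in> walks_between V E s t. \<forall>ys \<in> walks_between V E s t. walk_len w xs \<le> walk_len w ys}"

definition sigma :: "'a set \<Rightarrow> ('a \<times> 'a) set \<Rightarrow> ('a \<Rightarrow> 'a \<Rightarrow> real) \<Rightarrow> 'a \<Rightarrow> 'a \<Rightarrow> nat" where
  "sigma V E w s t = card (shortest_paths V E w s t)"

definition maxhop :: "'a set \<Rightarrow> ('a \<times> 'a) set \<Rightarrow> ('a \<Rightarrow> 'a \<Rightarrow> real) \<Rightarrow> 'a \<Rightarrow> 'a \<Rightarrow> nat" where
  "maxhop V E w s t = (if s = t then 0 else Max ((\<lambda>xs. length xs - 1) ` shortest_paths V E w s t))"

definition hopdiam :: "'a set \<Rightarrow> ('a \<times> 'a) set \<Rightarrow> ('a \<Rightarrow> 'a \<Rightarrow> real) \<Rightarrow> nat" where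
  "hopdiam V E w = Max {maxhop V E w s t | s t. s \<in> V \<and> t \<in> V}"

record 'a nstate =
  Dv :: "'a \<Rightarrow> ereal"
  NH :: "'a \<Rightarrow> 'a set"
  PH :: "'a \<Rightarrow> 'a set"
  Sv :: "'a \<Rightarrow> 'a \<Rightarrow> real"   \<comment> \<open>Sv st u t = S[u,t]\<close>
  Bv :: "'a \<Rightarrow> 'a \<Rightarrow> real"
  Cv :: real

definition init_state :: "'a \<Rightarrow> 'a nstate" where
  "init_state v = \<lparr> Dv = (\<lambda>t. \<infinity>)(v := 0), NH = (\<lambda>t. {}), PH = (\<lambda>t. {}),
      Sv = (\<lambda>u t. if u = v \<and> t = v then 1 else 0), Bv = (\<lambda>u t. 0), Cv = 0 \<rparr>"

text \<open>Processing, at node v, of the message (t,d,s,b) received from neighbour u.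
  Division by zero is 0 in Isabelle, matching the convention for S[x,t] = 0.\<close>
definition process_msg ::
  "'a set \<Rightarrow> ('a \<Rightarrow> 'a \<Rightarrow> real) \<Rightarrow> 'a \<Rightarrow> 'a \<Rightarrow> 'a \<Rightarrow> ereal \<Rightarrow> real \<Rightarrow> real
     \<Rightarrow> 'a nstate \<Rightarrow> 'a nstate" where
  "process_msg V w v u t d s b st =
    (let NH1 = (NH st)(t := NH st t - {u});
         PH1 = (PH st)(t := PH st t - {u});
         dw = d + ereal (w u v);
         st1 = (if dw < Dv st t then st\<lparr>Dv := (Dv st)(t := dw), NH := NH1, PH := PH1\<rparr>
                else if dw = Dv st t then st\<lparr>NH := NH1(t := insert u (NH1 t)), PH := PH1\<rparr>
                else if d - ereal (w u v) = Dv st t then st\<lparr>NH := NH1, PH := PH1(t := insert u (PH1 t))\<rparr>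
                else st\<lparr>NH := NH1, PH := PH1\<rparr>);
         S2 = (Sv st1)(u := (Sv st1 u)(t := s));
         B2 = (Bv st1)(u := (Bv st1 u)(t := b));
         S3 = (if t \<noteq> v then S2(v := (S2 v)(t := (\<Sum>x \<in> NH st1 t. S2 x t))) else S2);
         B3 = B2(v := (B2 v)(t := S3 v t * (\<Sum>x \<in> PH st1 t. (B2 x t + 1) / S3 x t)))
     in st1\<lparr>Sv := S3, Bv := B3, Cv := (\<Sum>x \<in> V - {v}. B3 v x)\<rparr>)"

text \<open>Processing at node v of a list of (sender, target) pairs; the messages carry
  the senders' state g at the beginning of the phase.\<close>
definition process_list ::
  "'a set \<Rightarrow> ('a \<Rightarrow> 'a \<Rightarrow> real) \<Rightarrow> ('a \<Rightarrow> 'a nstate) \<Rightarrow> 'a \<Rightarrow> ('a \<times> 'a) list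
     \<Rightarrow> 'a nstate \<Rightarrow> 'a nstate" where
  "process_list V w g v ms st =
     fold (\<lambda>(u, t) st'. process_msg V w v u t (Dv (g u) t) (Sv (g u) u t) (Bv (g u) u t) st') ms st"

text \<open>ord k v: the (arbitrary) order in which node v processes the messages it
  receives in phase k+1.  run k: global state after k complete phases.\<close>
fun run ::
  "'a set \<Rightarrow> ('a \<Rightarrow> 'a \<Rightarrow> real) \<Rightarrow> (nat \<Rightarrow> 'a \<Rightarrow> ('a \<times> 'a) list) \<Rightarrow> nat \<Rightarrow> 'a \<Rightarrow> 'a nstate" where
  "run V w ord 0 = init_state"
| "run V w ord (Suc k) = (\<lambda>v. process_list V w (run V w ord k) v (ord k v) (run V w ord k v))"

text \<open>State of node v after k complete phases and the first j message processings of phase k+1.\<close>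
definition state_at ::
  "'a set \<Rightarrow> ('a \<Rightarrow> 'a \<Rightarrow> real) \<Rightarrow> (nat \<Rightarrow> 'a \<Rightarrow> ('a \<times> 'a) list) \<Rightarrow> nat \<Rightarrow> nat \<Rightarrow> 'a \<Rightarrow> 'a nstate" where
  "state_at V w ord k j v = process_list V w (run V w ord k) v (take j (ord k v)) (run V w ord k v)"

end

theory Submission
  imports Defs
begin

(* The distance estimates D[t] behave as in Bellman-Ford: they never drop
   below dist(v,t), and after k phases D[t] is exact at every v having a shortest v-t path
   with at most k edges.  Once D[t] is exact at v and at the next hops of v (the neighbours u
   with dist(u,t) + w(u,v) = dist(v,t), whose maxhop is smaller), a message for t from a
   neighbour u puts u into NH[t] iff u is a next hop, and stores its S[u,t].  Hence one phase
   later NH[t] is exactly the set of next hops, and the invariant S[v,t] = sum of S[x,t] over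
   NH[t], together with sigma(v,t) = sum of sigma(u,t) over the next hops u, gives the claim
   by induction on maxhop(v,t). *)

lemma not_is_walk_Nil [simp]: "\<not> is_walk V E []"
  by (simp add: is_walk_def)

lemma is_walk_Cons:
  "is_walk V E (x # xs) \<longleftrightarrow> x \<in> V \<and> (xs = [] \<or> (x, hd xs) \<in> E \<and> is_walk V E xs)"
proof (cases xs)
  case (Cons y ys)
  have "(\<forall>i < Suc (length ys). ((x # y # ys) ! i, (x # y # ys) ! Suc i) \<in> E) \<longleftrightarrow>
        (x, y) \<in> E \<and> (\<forall>i < length ys. ((y # ys) ! i, (y # ys) ! Suc i) \<in> E)"
    by (auto simp: less_Suc_eq_0_disj)
  then show ?thesis using Cons by (auto simp: is_walk_def)
qed (simp add: is_walk_def)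

lemma walk_len_singleton [simp]: "walk_len w [x] = 0"
  by (simp add: walk_len_def)

lemma walk_len_Cons_Cons [simp]: "walk_len w (x # y # xs) = w x y + walk_len w (y # xs)"
  unfolding walk_len_def by (simp add: sum.lessThan_Suc_shift del: sum.lessThan_Suc)

lemma walk_len_ge_length:
  assumes "is_walk V E xs" and "\<And>a b. (a, b) \<in> E \<Longrightarrow> c \<le> w a b"
  shows "real (length xs - 1) * c \<le> walk_len w xs"
  using assms(1)
proof (induction xs rule: induct_list012)
  case (3 x y ys)
  then have "real (length (y # ys) - 1) * c \<le> walk_len w (y # ys)" and "c \<le> w x y"
    using assms(2) by (auto simp: is_walk_Cons)
  then show ?case by (simp add: algebra_simps)
qed simp_all

lemma walks_between_nonempty: "xs \<in> walks_between V E s t \<Longrightarrow> xs \<noteq> []"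
  by (simp add: walks_between_def is_walk_def)

lemma walk_len_Cons:
  "xs \<in> walks_between V E u t \<Longrightarrow> walk_len w (x # xs) = w x u + walk_len w xs"
  by (cases xs) (auto simp: walks_between_def is_walk_def)

lemma walks_between_Cons:
  "(x, u) \<in> E \<Longrightarrow> x \<in> V \<Longrightarrow> xs \<in> walks_between V E u t \<Longrightarrow> x # xs \<in> walks_between V E x t"
  using walks_between_nonempty[of xs] by (cases xs) (auto simp: walks_between_def is_walk_Cons)

lemma walks_between_ConsE:
  assumes "xs \<in> walks_between V E x t" and "x \<noteq> t"
  obtains u ys where "xs = x # ys" and "(x, u) \<in> E" and "ys \<in> walks_between V E u t"
proof -
  obtain ys where xs: "xs = x # ys"
    using assms(1) by (cases xs) (auto simp: walks_between_def is_walk_def)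
  with assms have "ys \<noteq> []" by (auto simp: walks_between_def)
  with assms(1) xs show thesis
    by (intro that[of ys "hd ys"]) (auto simp: walks_between_def is_walk_Cons)
qed

lemma maxhop_le_hopdiam:
  assumes "finite V" and "s \<in> V" and "t \<in> V"
  shows "maxhop V E w s t \<le> hopdiam V E w"
  unfolding hopdiam_def
proof (rule Max_ge)
  show "finite {maxhop V E w s t |s t. s \<in> V \<and> t \<in> V}"
    using finite_image_set2[of "\<lambda>s. s \<in> V" "\<lambda>t. t \<in> V"] assms(1) by simp
qed (use assms(2,3) in blast)

locale weighted_graph =
  fixes V :: "'a set" and E :: "('a \<times> 'a) set" and w :: "'a \<Rightarrow> 'a \<Rightarrow> real"
  assumes finV: "finite V"
    and EV: "E \<subseteq> V \<times> V"
    and irrE: "\<And>v. (v, v) \<notin> E"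
    and conn: "\<And>s t. s \<in> V \<Longrightarrow> t \<in> V \<Longrightarrow> (s, t) \<in> E\<^sup>*"
    and wpos: "\<And>u v. (u, v) \<in> E \<Longrightarrow> w u v > 0"
    and wsym: "\<And>u v. (u, v) \<in> E \<Longrightarrow> w u v = w v u"
begin

lemma finite_E: "finite E"
  using finV EV by (meson finite_SigmaI finite_subset)

definition min_weight :: real where
  "min_weight = (if E = {} then 1 else Min ((\<lambda>(a, b). w a b) ` E))"

lemma min_weight_pos: "min_weight > 0"
proof (cases "E = {}")
  case False
  then have "Min ((\<lambda>(a, b). w a b) ` E) \<in> (\<lambda>(a, b). w a b) ` E"
    using finite_E by (intro Min_in) auto
  then show ?thesis using False wpos unfolding min_weight_def by auto
qed (unfold min_weight_def, simp)

lemma min_weight_le: "(a, b) \<in> E \<Longrightarrow> min_weight \<le> w a b"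
  unfolding min_weight_def using finite_E by (auto intro!: Min_le)

lemma walk_len_lower_bound: "is_walk V E xs \<Longrightarrow> real (length xs - 1) * min_weight \<le> walk_len w xs"
  by (rule walk_len_ge_length) (auto intro: min_weight_le)

lemma walk_len_nonneg: "is_walk V E xs \<Longrightarrow> 0 \<le> walk_len w xs"
  using walk_len_lower_bound[of xs] min_weight_pos
  by (meson order_trans mult_nonneg_nonneg of_nat_0_le_iff less_imp_le)

lemma walks_between_exists:
  assumes "s \<in> V" and "t \<in> V"
  shows "\<exists>xs. xs \<in> walks_between V E s t"
  using conn[OF assms]
proof (induction rule: converse_rtrancl_induct)
  case base
  show ?case using assms by (intro exI[of _ "[t]"]) (simp add: walks_between_def is_walk_def)
next
  case (step y z)
  then obtain xs where "xs \<in> walks_between V E z t" by blast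
  moreover have "y \<in> V" using step.hyps(1) EV by auto
  ultimately show ?case using walks_between_Cons[OF step.hyps(1)] by blast
qed

lemma finite_walks_between_len_le: "finite {xs \<in> walks_between V E s t. walk_len w xs \<le> L}"
proof (rule finite_subset)
  let ?n = "nat \<lfloor>L / min_weight\<rfloor> + 1"
  show "{xs \<in> walks_between V E s t. walk_len w xs \<le> L} \<subseteq> {xs. set xs \<subseteq> V \<and> length xs \<le> ?n}"
  proof safe
    fix xs assume xs: "xs \<in> walks_between V E s t" "walk_len w xs \<le> L"
    then have walk: "is_walk V E xs" by (simp add: walks_between_def)
    then show "\<And>x. x \<in> set xs \<Longrightarrow> x \<in> V" by (auto simp: is_walk_def)
    have "real (length xs - 1) * min_weight \<le> L"
      using walk_len_lower_bound[OF walk] xs(2) by simp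
    then have "real (length xs - 1) \<le> L / min_weight"
      using min_weight_pos by (simp add: pos_le_divide_eq)
    then show "length xs \<le> ?n" by linarith
  qed
  show "finite {xs. set xs \<subseteq> V \<and> length xs \<le> ?n}"
    by (rule finite_lists_length_le[OF finV])
qed

end

locale weighted_graph_target = weighted_graph +
  fixes t :: 'a
  assumes tV: "t \<in> V"
begin

abbreviation walks_to :: "'a \<Rightarrow> 'a list set" where
  "walks_to x \<equiv> walks_between V E x t"

abbreviation shortest_to :: "'a \<Rightarrow> 'a list set" where
  "shortest_to x \<equiv> shortest_paths V E w x t"

lemma shortest_to_exists:
  assumes "x \<in> V"
  shows "\<exists>p. p \<in> shortest_to x"
proof -
  obtain q where q: "q \<in> walks_to x" using walks_between_exists[OF assms tV] by blast
  let ?F = "{xs \<in> walks_to x. walk_len w xs \<le> walk_len w q}"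
  have fin: "finite ?F" by (rule finite_walks_between_len_le)
  have "Min (walk_len w ` ?F) \<in> walk_len w ` ?F"
    using fin q by (intro Min_in) auto
  then obtain p where p: "p \<in> ?F" "walk_len w p = Min (walk_len w ` ?F)" by auto
  have "walk_len w p \<le> walk_len w ys" if "ys \<in> walks_to x" for ys
  proof (cases "walk_len w ys \<le> walk_len w q")
    case True
    then show ?thesis using p fin that by simp
  qed (use p in simp)
  then show ?thesis using p by (auto simp: shortest_paths_def)
qed

lemma finite_shortest_to: "finite (shortest_to x)"
proof (cases "shortest_to x = {}")
  case False
  then obtain p where "p \<in> shortest_to x" by auto
  then have "shortest_to x \<subseteq> {xs \<in> walks_to x. walk_len w xs \<le> walk_len w p}"
    by (auto simp: shortest_paths_def)
  then show ?thesis using finite_walks_between_len_le finite_subset by blast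
qed simp

definition dist_t :: "'a \<Rightarrow> real" where
  "dist_t x = walk_len w (SOME p. p \<in> shortest_to x)"

lemma walk_len_shortest_to:
  assumes p: "p \<in> shortest_to x"
  shows "walk_len w p = dist_t x"
proof -
  have "(SOME p. p \<in> shortest_to x) \<in> shortest_to x" using p by (rule someI)
  with p have "walk_len w (SOME p. p \<in> shortest_to x) \<le> walk_len w p"
    and "walk_len w p \<le> walk_len w (SOME p. p \<in> shortest_to x)"
    by (simp_all add: shortest_paths_def)
  then show ?thesis unfolding dist_t_def by linarith
qed

lemma dist_t_le_walk_len:
  assumes "x \<in> V" and "q \<in> walks_to x"
  shows "dist_t x \<le> walk_len w q"
proof -
  obtain p where p: "p \<in> shortest_to x" using shortest_to_exists[OF assms(1)] by blast
  then show ?thesis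
    using assms(2) walk_len_shortest_to[OF p] by (simp add: shortest_paths_def)
qed

lemma shortest_to_iff:
  "x \<in> V \<Longrightarrow> p \<in> shortest_to x \<longleftrightarrow> p \<in> walks_to x \<and> walk_len w p = dist_t x"
  using walk_len_shortest_to dist_t_le_walk_len by (auto simp: shortest_paths_def)

lemma dist_t_target: "dist_t t = 0"
proof (rule order_antisym)
  have "[t] \<in> walks_to t" using tV by (simp add: walks_between_def is_walk_def)
  then show "dist_t t \<le> 0" using dist_t_le_walk_len[OF tV] by fastforce
  obtain p where p: "p \<in> shortest_to t" using shortest_to_exists[OF tV] by blast
  then have "is_walk V E p" by (simp add: shortest_paths_def walks_between_def)
  then show "0 \<le> dist_t t" using walk_len_nonneg walk_len_shortest_to[OF p] by metis
qed

lemma shortest_to_target: "shortest_to t = {[t]}"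
proof -
  have "p = [t]" if p: "p \<in> shortest_to t" for p
  proof -
    have walk: "is_walk V E p" "hd p = t" using p by (auto simp: shortest_paths_def walks_between_def)
    have "real (length p - 1) * min_weight \<le> 0"
      using walk_len_lower_bound[OF walk(1)] walk_len_shortest_to[OF p] dist_t_target by simp
    then have "length p - 1 = 0" using min_weight_pos by (simp add: mult_le_0_iff)
    with walk show "p = [t]" by (cases p) auto
  qed
  moreover have "[t] \<in> shortest_to t"
    using tV dist_t_target shortest_to_iff[OF tV] by (simp add: walks_between_def is_walk_def)
  ultimately show ?thesis by blast
qed

lemma dist_t_triangle:
  assumes e: "(x, u) \<in> E"
  shows "dist_t x \<le> w x u + dist_t u"
proof -
  have V: "x \<in> V" "u \<in> V" using e EV by auto
  obtain p where p: "p \<in> shortest_to u" using shortest_to_exists V by blast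
  then have walk: "p \<in> walks_to u" by (simp add: shortest_paths_def)
  have "dist_t x \<le> walk_len w (x # p)"
    using dist_t_le_walk_len[OF V(1) walks_between_Cons[OF e V(1) walk]] .
  also have "\<dots> = w x u + dist_t u"
    using walk_len_Cons[OF walk] walk_len_shortest_to[OF p] by simp
  finally show ?thesis .
qed

definition next_hops :: "'a \<Rightarrow> 'a set" where
  "next_hops x = {u. (x, u) \<in> E \<and> dist_t u + w u x = dist_t x}"

lemma next_hops_edge: "u \<in> next_hops x \<Longrightarrow> (x, u) \<in> E"
  by (simp add: next_hops_def)

lemma finite_next_hops: "finite (next_hops x)"
  by (rule finite_subset[of _ "snd ` E"]) (force simp: next_hops_def, simp add: finite_E)

lemma shortest_to_Cons:
  assumes "u \<in> next_hops x" and "p \<in> shortest_to u"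
  shows "x # p \<in> shortest_to x"
proof -
  have e: "(x, u) \<in> E" using assms(1) next_hops_edge by blast
  then have xV: "x \<in> V" using EV by auto
  have p: "p \<in> walks_to u" using assms(2) by (simp add: shortest_paths_def)
  have "walk_len w (x # p) = w x u + dist_t u"
    using walk_len_Cons[OF p] walk_len_shortest_to[OF assms(2)] by simp
  also have "\<dots> = dist_t x" using assms(1) wsym[OF e] by (simp add: next_hops_def)
  finally show ?thesis using shortest_to_iff[OF xV] walks_between_Cons[OF e xV p] by simp
qed

lemma shortest_to_decompose:
  assumes "x \<in> V" and "x \<noteq> t"
  shows "shortest_to x = (\<Union>u \<in> next_hops x. (#) x ` shortest_to u)"
proof
  show "(\<Union>u \<in> next_hops x. (#) x ` shortest_to u) \<subseteq> shortest_to x"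
    using shortest_to_Cons by blast
  show "shortest_to x \<subseteq> (\<Union>u \<in> next_hops x. (#) x ` shortest_to u)"
  proof
    fix xs assume "xs \<in> shortest_to x"
    then have xs: "xs \<in> walks_to x" "walk_len w xs = dist_t x"
      using shortest_to_iff assms(1) by auto
    then obtain u ys where ys: "xs = x # ys" "(x, u) \<in> E" "ys \<in> walks_to u"
      using assms(2) by (blast elim: walks_between_ConsE)
    have uV: "u \<in> V" using ys(2) EV by auto
    have "walk_len w xs = w x u + walk_len w ys" using walk_len_Cons[OF ys(3)] ys(1) by simp
    moreover have "dist_t x \<le> w x u + dist_t u" using dist_t_triangle[OF ys(2)] .
    moreover have "dist_t u \<le> walk_len w ys" using dist_t_le_walk_len[OF uV ys(3)] .
    ultimately have "walk_len w ys = dist_t u" and "dist_t u + w u x = dist_t x"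
      using xs(2) wsym[OF ys(2)] by linarith+
    then have "ys \<in> shortest_to u" and "u \<in> next_hops x"
      using shortest_to_iff[OF uV] ys by (auto simp: next_hops_def)
    then show "xs \<in> (\<Union>u \<in> next_hops x. (#) x ` shortest_to u)" using ys(1) by blast
  qed
qed

lemma hd_shortest_to: "p \<in> shortest_to u \<Longrightarrow> hd p = u"
  by (simp add: shortest_paths_def walks_between_def)

lemma sigma_next_hops:
  assumes "x \<in> V" and "x \<noteq> t"
  shows "real (sigma V E w x t) = (\<Sum>u \<in> next_hops x. real (sigma V E w u t))"
proof -
  have "card (shortest_to x) = (\<Sum>u \<in> next_hops x. card ((#) x ` shortest_to u))"
    unfolding shortest_to_decompose[OF assms]
  proof (rule card_UN_disjoint[OF finite_next_hops])
    show "\<forall>u \<in> next_hops x. finite ((#) x ` shortest_to u)"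
      using finite_shortest_to by blast
    show "\<forall>u \<in> next_hops x. \<forall>u' \<in> next_hops x. u \<noteq> u' \<longrightarrow>
        (#) x ` shortest_to u \<inter> (#) x ` shortest_to u' = {}"
      using hd_shortest_to by blast
  qed
  also have "\<dots> = (\<Sum>u \<in> next_hops x. card (shortest_to u))"
    by (rule sum.cong) (auto intro: card_image inj_onI)
  finally show ?thesis by (simp add: sigma_def)
qed

lemma length_le_maxhop:
  assumes "p \<in> shortest_to x"
  shows "length p - 1 \<le> maxhop V E w x t"
proof (cases "x = t")
  case True
  then show ?thesis using assms by (simp add: shortest_to_target)
qed (use assms finite_shortest_to in \<open>auto simp: maxhop_def\<close>)

lemma maxhop_attained:
  assumes "x \<in> V"
  obtains p where "p \<in> shortest_to x" and "maxhop V E w x t = length p - 1"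
proof (cases "x = t")
  case True
  then show thesis using that by (simp add: maxhop_def shortest_to_target)
next
  case False
  obtain p0 where "p0 \<in> shortest_to x" using shortest_to_exists assms by blast
  then have "Max ((\<lambda>xs. length xs - 1) ` shortest_to x) \<in> (\<lambda>xs. length xs - 1) ` shortest_to x"
    using finite_shortest_to by (intro Max_in) auto
  then show thesis using that False by (auto simp: maxhop_def)
qed

lemma maxhop_next_hop_less:
  assumes "x \<in> V" and "x \<noteq> t" and "u \<in> next_hops x"
  shows "maxhop V E w u t < maxhop V E w x t"
proof -
  have "u \<in> V" using assms(3) next_hops_edge EV by blast
  then obtain p where p: "p \<in> shortest_to u" "maxhop V E w u t = length p - 1"
    by (rule maxhop_attained)
  have "p \<noteq> []" using p(1) by (auto simp: shortest_paths_def dest: walks_between_nonempty)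
  then show ?thesis using length_le_maxhop[OF shortest_to_Cons[OF assms(3) p(1)]] p(2) by (cases p) auto
qed

end

lemma Dv_process_msg:
  "Dv (process_msg V w v u t' d s b st) t =
    (if t = t' \<and> d + ereal (w u v) < Dv st t then d + ereal (w u v) else Dv st t)"
  unfolding process_msg_def Let_def by auto

lemma NH_process_msg:
  "NH (process_msg V w v u t' d s b st) t =
    (if t \<noteq> t' then NH st t
     else if d + ereal (w u v) = Dv st t then insert u (NH st t) else NH st t - {u})"
  unfolding process_msg_def Let_def by auto

lemma Sv_process_msg_other:
  "x \<noteq> v \<Longrightarrow> Sv (process_msg V w v u t' d s b st) x t = (if x = u \<and> t = t' then s else Sv st x t)"
  by (cases "d + ereal (w u v) < Dv st t'"; cases "d + ereal (w u v) = Dv st t'";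
      cases "d - ereal (w u v) = Dv st t'") (simp_all add: process_msg_def Let_def)

lemma Sv_process_msg_self_unchanged:
  "u \<noteq> v \<Longrightarrow> t \<noteq> t' \<or> t = v \<Longrightarrow> Sv (process_msg V w v u t' d s b st) v t = Sv st v t"
  by (cases "d + ereal (w u v) < Dv st t'"; cases "d + ereal (w u v) = Dv st t'";
      cases "d - ereal (w u v) = Dv st t'") (auto simp add: process_msg_def Let_def)

lemma Sv_process_msg_self:
  assumes "u \<noteq> v" and "t \<noteq> v"
  shows "Sv (process_msg V w v u t d s b st) v t =
    (\<Sum>x \<in> NH (process_msg V w v u t d s b st) t. if x = u then s else Sv st x t)"
  using assms
  by (cases "d + ereal (w u v) < Dv st t"; cases "d + ereal (w u v) = Dv st t";
      cases "d - ereal (w u v) = Dv st t")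
    (simp_all add: process_msg_def Let_def if_distrib[of "\<lambda>f. f t"] cong: if_cong)

lemma process_list_Nil [simp]: "process_list V w g v [] st = st"
  by (simp add: process_list_def)

lemma process_list_Cons [simp]: "process_list V w g v ((u, t') # ms) st =
  process_list V w g v ms (process_msg V w v u t' (Dv (g u) t') (Sv (g u) u t') (Bv (g u) u t') st)"
  by (simp add: process_list_def)

lemma process_list_invariant:
  assumes "P st"
    and "\<And>u t' st. (u, t') \<in> set ms \<Longrightarrow> P st \<Longrightarrow>
           P (process_msg V w v u t' (Dv (g u) t') (Sv (g u) u t') (Bv (g u) u t') st)"
  shows "P (process_list V w g v ms st)"
  using assms by (induction ms arbitrary: st) auto

lemma Dv_process_msg_le: "Dv (process_msg V w v u t' d s b st) t \<le> Dv st t"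
  by (auto simp: Dv_process_msg)

lemma Dv_process_list_le: "Dv (process_list V w g v ms st) t \<le> Dv st t"
proof (induction ms arbitrary: st)
  case (Cons m ms)
  obtain u t' where m: "m = (u, t')" by (cases m)
  show ?case
    unfolding m process_list_Cons using Cons.IH Dv_process_msg_le by (rule order_trans)
qed simp

lemma Dv_process_list_le_message:
  "(u, t) \<in> set ms \<Longrightarrow> Dv (process_list V w g v ms st) t \<le> Dv (g u) t + ereal (w u v)"
proof (induction ms arbitrary: st)
  case (Cons m ms)
  show ?case
  proof (cases "(u, t) \<in> set ms")
    case True
    then show ?thesis using Cons.IH by (cases m) simp
  next
    case False
    then have m: "m = (u, t)" using Cons.prems by auto
    have "Dv (process_msg V w v u t (Dv (g u) t) (Sv (g u) u t) (Bv (g u) u t) st) t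
        \<le> Dv (g u) t + ereal (w u v)"
      by (simp add: Dv_process_msg not_less)
    then show ?thesis unfolding m process_list_Cons by (rule order_trans[OF Dv_process_list_le])
  qed
qed simp

lemma state_at_0: "state_at V w ord k 0 v = run V w ord k v"
  by (simp add: state_at_def)

context weighted_graph_target
begin

lemma process_msg_exact_distance:
  assumes e: "(v, u) \<in> E" and Dv_st: "Dv st t = ereal (dist_t v)"
    and lower: "ereal (dist_t u) \<le> d" and exact: "u \<in> next_hops v \<Longrightarrow> d = ereal (dist_t u)"
  shows "Dv (process_msg V w v u t d s b st) t = ereal (dist_t v)"
    and "NH (process_msg V w v u t d s b st) t =
      (if u \<in> next_hops v then insert u (NH st t) else NH st t - {u})"
proof -
  have tri: "dist_t v \<le> dist_t u + w u v" using dist_t_triangle[OF e] wsym[OF e] by simp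
  have lb: "ereal (dist_t u + w u v) \<le> d + ereal (w u v)"
    using add_right_mono[OF lower, of "ereal (w u v)"] by simp
  have "\<not> d + ereal (w u v) < Dv st t"
    using tri lb Dv_st by (metis ereal_less_eq(3) leD order_trans)
  then show "Dv (process_msg V w v u t d s b st) t = ereal (dist_t v)"
    using Dv_st by (simp add: Dv_process_msg)
  have "d + ereal (w u v) = Dv st t \<longleftrightarrow> u \<in> next_hops v"
  proof
    assume "d + ereal (w u v) = Dv st t"
    then have "dist_t u + w u v = dist_t v" using tri lb Dv_st by simp
    then show "u \<in> next_hops v" using e by (simp add: next_hops_def)
  qed (use exact Dv_st in \<open>simp add: next_hops_def\<close>)
  then show "NH (process_msg V w v u t d s b st) t =
      (if u \<in> next_hops v then insert u (NH st t) else NH st t - {u})"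
    by (simp add: NH_process_msg)
qed

lemma process_list_exact_distance:
  assumes "set ms \<subseteq> nbrs E v \<times> V" and "Dv st t = ereal (dist_t v)"
    and lower: "\<And>u. (v, u) \<in> E \<Longrightarrow> ereal (dist_t u) \<le> Dv (g u) t"
    and exact: "\<And>u. u \<in> next_hops v \<Longrightarrow> Dv (g u) t = ereal (dist_t u)"
  shows "Dv (process_list V w g v ms st) t = ereal (dist_t v) \<and>
    (\<forall>u. u \<in> NH (process_list V w g v ms st) t \<longleftrightarrow>
          (if (u, t) \<in> set ms then u \<in> next_hops v else u \<in> NH st t)) \<and>
    (\<forall>x. x \<noteq> v \<longrightarrow> Sv (process_list V w g v ms st) x t =
          (if (x, t) \<in> set ms then Sv (g x) x t else Sv st x t))"
  using assms(1,2)
proof (induction ms arbitrary: st)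
  case (Cons m ms)
  obtain u t' where m: "m = (u, t')" by (cases m)
  let ?st' = "process_msg V w v u t' (Dv (g u) t') (Sv (g u) u t') (Bv (g u) u t') st"
  have e: "(v, u) \<in> E" using Cons.prems m by (auto simp: nbrs_def)
  have "Dv ?st' t = ereal (dist_t v) \<and>
    NH ?st' t = (if t' = t then (if u \<in> next_hops v then insert u (NH st t) else NH st t - {u})
                 else NH st t) \<and>
    (\<forall>x. x \<noteq> v \<longrightarrow> Sv ?st' x t = (if x = u \<and> t' = t then Sv (g u) u t else Sv st x t))"
    using process_msg_exact_distance[OF e Cons.prems(2) lower[OF e] exact]
    by (cases "t' = t") (auto simp: Dv_process_msg NH_process_msg Sv_process_msg_other Cons.prems(2))
  with Cons.IH[of ?st'] Cons.prems(1) show ?case by (auto simp: m)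
qed simp

end

locale sync_run = weighted_graph_target +
  fixes ord :: "nat \<Rightarrow> 'a \<Rightarrow> ('a \<times> 'a) list"
  assumes ord_ok: "\<And>k v. v \<in> V \<Longrightarrow> distinct (ord k v) \<and> set (ord k v) = nbrs E v \<times> V"
begin

lemma mem_ord_iff: "v \<in> V \<Longrightarrow> (u, t') \<in> set (ord k v) \<longleftrightarrow> (v, u) \<in> E \<and> t' \<in> V"
  using ord_ok[of v k] by (auto simp: nbrs_def)

lemma state_at_invariant [consumes 1, case_names init step]:
  assumes "v \<in> V"
    and init: "\<And>v. v \<in> V \<Longrightarrow> P v (init_state v)"
    and step: "\<And>g v u t' st. v \<in> V \<Longrightarrow> (v, u) \<in> E \<Longrightarrow> t' \<in> V \<Longrightarrow> \<forall>x \<in> V. P x (g x) \<Longrightarrow>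
       P v st \<Longrightarrow> P v (process_msg V w v u t' (Dv (g u) t') (Sv (g u) u t') (Bv (g u) u t') st)"
  shows "P v (state_at V w ord k j v)"
proof -
  have phase: "P v (process_list V w g v ms (g v))"
    if "\<forall>x \<in> V. P x (g x)" "v \<in> V" "set ms \<subseteq> set (ord k v)" for g v ms k
    by (rule process_list_invariant[where P = "P v"])
      (use that step mem_ord_iff in \<open>blast, metis subsetD\<close>)
  have run: "\<forall>v \<in> V. P v (run V w ord k v)" for k
  proof (induction k)
    case (Suc k)
    then show ?case using phase[OF Suc.IH _ subset_refl] by simp
  qed (simp add: init)
  show ?thesis
    unfolding state_at_def by (rule phase[OF run \<open>v \<in> V\<close> set_take_subset])
qed

lemma dist_t_le_Dv:
  assumes "v \<in> V"
  shows "ereal (dist_t v) \<le> Dv (state_at V w ord k j v) t"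
  using assms
proof (induction rule: state_at_invariant[where P = "\<lambda>v st. ereal (dist_t v) \<le> Dv st t"])
  case (init v)
  show ?case using dist_t_target by (cases "v = t") (simp_all add: init_state_def)
next
  case (step g v u t' st)
  have "ereal (dist_t v) \<le> ereal (dist_t u) + ereal (w u v)"
    using dist_t_triangle[OF step(2)] wsym[OF step(2)] by simp
  also have "\<dots> \<le> Dv (g u) t + ereal (w u v)"
    using step(2,4) EV by (intro add_right_mono) auto
  finally show ?case using step(5) by (auto simp: Dv_process_msg)
qed

lemma Dv_run_le_walk_len:
  "xs \<in> walks_to v \<Longrightarrow> length xs \<le> Suc k \<Longrightarrow> Dv (run V w ord k v) t \<le> ereal (walk_len w xs)"
proof (induction k arbitrary: v xs)
  case 0
  then have "xs = [v]" "v = t" by (cases xs, auto simp: walks_between_def)+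
  then show ?case by (simp add: init_state_def)
next
  case (Suc k)
  show ?case
  proof (cases "v = t")
    case True
    have t_walk: "[t] \<in> walks_to t" using tV by (simp add: walks_between_def is_walk_def)
    have "Dv (run V w ord (Suc k) v) t \<le> Dv (run V w ord k t) t"
      using True Dv_process_list_le by simp
    also have "\<dots> \<le> 0" using Suc.IH[OF t_walk] by (simp add: zero_ereal_def)
    also have "\<dots> \<le> ereal (walk_len w xs)"
      using walk_len_nonneg Suc.prems(1) by (simp add: walks_between_def)
    finally show ?thesis .
  next
    case False
    with Suc.prems(1) obtain u ys where ys: "xs = v # ys" "(v, u) \<in> E" "ys \<in> walks_to u"
      by (blast elim: walks_between_ConsE)
    have "v \<in> V" using ys(2) EV by auto
    then have "(u, t) \<in> set (ord k v)" using mem_ord_iff ys(2) tV by simp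
    then have "Dv (run V w ord (Suc k) v) t \<le> Dv (run V w ord k u) t + ereal (w u v)"
      by (simp add: Dv_process_list_le_message)
    also have "\<dots> \<le> ereal (walk_len w ys) + ereal (w u v)"
      using Suc.IH[OF ys(3)] Suc.prems(2) ys(1) by (intro add_right_mono) simp
    also have "\<dots> = ereal (walk_len w xs)"
      using walk_len_Cons[OF ys(3)] ys(1) wsym[OF ys(2)] by simp
    finally show ?thesis .
  qed
qed

lemma Dv_run_exact:
  assumes "v \<in> V" and "maxhop V E w v t \<le> k"
  shows "Dv (run V w ord k v) t = ereal (dist_t v)"
proof (rule order_antisym)
  obtain p where p: "p \<in> shortest_to v" using shortest_to_exists assms(1) by blast
  have "length p \<le> Suc k" using length_le_maxhop[OF p] assms(2) by linarith
  moreover have "p \<in> walks_to v" using p by (simp add: shortest_paths_def)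
  ultimately show "Dv (run V w ord k v) t \<le> ereal (dist_t v)"
    using Dv_run_le_walk_len walk_len_shortest_to[OF p] by metis
  show "ereal (dist_t v) \<le> Dv (run V w ord k v) t"
    using dist_t_le_Dv[OF assms(1), of k 0] by (simp add: state_at_0)
qed

lemma NH_subset_Sv_sum:
  assumes "v \<in> V"
  shows "NH (state_at V w ord k j v) t \<subseteq> nbrs E v \<and>
    (v \<noteq> t \<longrightarrow> Sv (state_at V w ord k j v) v t =
       (\<Sum>x \<in> NH (state_at V w ord k j v) t. Sv (state_at V w ord k j v) x t))"
  using assms
proof (induction rule: state_at_invariant[where P = "\<lambda>v st. NH st t \<subseteq> nbrs E v \<and>
    (v \<noteq> t \<longrightarrow> Sv st v t = (\<Sum>x \<in> NH st t. Sv st x t))"])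
  case (step g v u t' st)
  let ?st' = "process_msg V w v u t' (Dv (g u) t') (Sv (g u) u t') (Bv (g u) u t') st"
  have uv: "u \<noteq> v" using step(2) irrE by blast
  have NH: "NH ?st' t \<subseteq> nbrs E v" using step(2,5) by (auto simp: NH_process_msg nbrs_def)
  have "v \<notin> nbrs E v" using irrE by (simp add: nbrs_def)
  show ?case
  proof (cases "t' = t")
    case True
    have "Sv ?st' v t = (\<Sum>x \<in> NH ?st' t. Sv ?st' x t)" if "v \<noteq> t"
    proof -
      have "Sv ?st' v t = (\<Sum>x \<in> NH ?st' t. if x = u then Sv (g u) u t else Sv st x t)"
        using Sv_process_msg_self[OF uv] True that by simp
      also have "\<dots> = (\<Sum>x \<in> NH ?st' t. Sv ?st' x t)"
      proof (rule sum.cong)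
        fix x assume "x \<in> NH ?st' t"
        then have "x \<noteq> v" using NH \<open>v \<notin> nbrs E v\<close> by blast
        then show "(if x = u then Sv (g u) u t else Sv st x t) = Sv ?st' x t"
          using True by (simp add: Sv_process_msg_other)
      qed simp
      finally show ?thesis .
    qed
    with NH show ?thesis by blast
  next
    case False
    have "NH ?st' t = NH st t" using False by (simp add: NH_process_msg)
    moreover have "Sv ?st' x t = Sv st x t" for x
      using False uv by (cases "x = v") (simp_all add: Sv_process_msg_other
          Sv_process_msg_self_unchanged)
    ultimately show ?thesis using step(5) by simp
  qed
qed (auto simp: init_state_def)

lemma Sv_state_at_self: "v \<in> V \<Longrightarrow> Sv (state_at V w ord k j v) v v = 1"
proof (induction rule: state_at_invariant[where P = "\<lambda>v st. Sv st v v = 1"])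
  case (step g v u t' st)
  then have "u \<noteq> v" using irrE by blast
  then show ?case using step(5) by (simp add: Sv_process_msg_self_unchanged)
qed (simp add: init_state_def)

definition next_hops_known :: "'a \<Rightarrow> 'a nstate \<Rightarrow> bool" where
  "next_hops_known v st \<longleftrightarrow>
    NH st t = next_hops v \<and> (\<forall>x \<in> next_hops v. Sv st x t = real (sigma V E w x t))"

(* A whole phase establishes next_hops_known; a partial phase preserves it. *)
lemma next_hops_known_process_list:
  assumes vV: "v \<in> V" and "v \<noteq> t" and "maxhop V E w v t \<le> k"
    and sigma_next: "\<And>u. u \<in> next_hops v \<Longrightarrow> Sv (run V w ord k u) u t = real (sigma V E w u t)"
    and ms: "ms = ord k v \<or> set ms \<subseteq> set (ord k v) \<and> next_hops_known v (run V w ord k v)"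
  shows "next_hops_known v (process_list V w (run V w ord k) v ms (run V w ord k v))"
proof -
  have next_V: "(v, u) \<in> E \<Longrightarrow> u \<in> V" for u using EV by auto
  have ms_nbrs: "set ms \<subseteq> nbrs E v \<times> V" using ms ord_ok[OF vV] by blast
  have lower: "ereal (dist_t u) \<le> Dv (run V w ord k u) t" if "(v, u) \<in> E" for u
    using dist_t_le_Dv[OF next_V[OF that], of k 0] by (simp add: state_at_0)
  have exact: "Dv (run V w ord k u) t = ereal (dist_t u)" if "u \<in> next_hops v" for u
    using Dv_run_exact next_hops_edge[OF that] maxhop_next_hop_less[OF vV \<open>v \<noteq> t\<close> that]
      \<open>maxhop V E w v t \<le> k\<close> next_V by fastforce
  note phase = process_list_exact_distance[OF ms_nbrs Dv_run_exact[OF vV \<open>maxhop V E w v t \<le> k\<close>]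
      lower exact]
  have unsent: "(u \<in> NH (run V w ord k v) t \<longleftrightarrow> u \<in> next_hops v) \<and>
      (u \<in> next_hops v \<longrightarrow> Sv (run V w ord k v) u t = real (sigma V E w u t))"
    if "(u, t) \<notin> set ms" for u
    using ms
  proof
    assume "ms = ord k v"
    with that have "(v, u) \<notin> E" using mem_ord_iff[OF vV] tV by simp
    moreover have "NH (run V w ord k v) t \<subseteq> nbrs E v"
      using NH_subset_Sv_sum[OF vV, of k 0] by (simp add: state_at_0)
    ultimately show ?thesis using next_hops_edge by (auto simp: nbrs_def)
  qed (simp add: next_hops_known_def)
  have "x \<noteq> v" if "x \<in> next_hops v" for x using that next_hops_edge irrE by blast
  then show ?thesis
    using phase sigma_next unsent unfolding next_hops_known_def by (auto split: if_split_asm)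
qed

lemma Sv_state_at_eq_sigma:
  "v \<in> V \<Longrightarrow> maxhop V E w v t < k \<Longrightarrow> Sv (state_at V w ord k j v) v t = real (sigma V E w v t)"
proof (induction "maxhop V E w v t" arbitrary: v k j rule: less_induct)
  case less
  show ?case
  proof (cases "v = t")
    case True
    then show ?thesis using Sv_state_at_self less.prems(1) shortest_to_target by (simp add: sigma_def)
  next
    case False
    obtain p where k: "k = Suc p" using less.prems(2) by (cases k) auto
    have sigma_next: "Sv (run V w ord k' u) u t = real (sigma V E w u t)"
      if "u \<in> next_hops v" and "maxhop V E w v t \<le> k'" for u k'
      using less.hyps[of u k' 0] maxhop_next_hop_less[OF less.prems(1) False that(1)] that
        next_hops_edge EV by (force simp: state_at_0)
    have "next_hops_known v (run V w ord k v)"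
      using next_hops_known_process_list[of v p "ord p v"] less.prems sigma_next False k by simp
    then have "next_hops_known v (state_at V w ord k j v)"
      using next_hops_known_process_list[of v k "take j (ord k v)"] less.prems sigma_next False
      by (simp add: state_at_def set_take_subset)
    then show ?thesis
      using NH_subset_Sv_sum[OF less.prems(1)] sigma_next_hops[OF less.prems(1) False] False
      by (simp add: next_hops_known_def)
  qed
qed

end

theorem lemma3:
  fixes V :: "'a set" and E :: "('a \<times> 'a) set" and w :: "'a \<Rightarrow> 'a \<Rightarrow> real"
    and ord :: "nat \<Rightarrow> 'a \<Rightarrow> ('a \<times> 'a) list"
  assumes finV: "finite V"
    and EV: "E \<subseteq> V \<times> V"
    and symE: "\<And>u v. (u, v) \<in> E \<Longrightarrow> (v, u) \<in> E"
    and irrE: "\<And>v. (v, v) \<notin> E"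
    and conn: "\<And>s t. s \<in> V \<Longrightarrow> t \<in> V \<Longrightarrow> (s, t) \<in> E\<^sup>*"
    and wpos: "\<And>u v. (u, v) \<in> E \<Longrightarrow> w u v > 0"
    and wsym: "\<And>u v. (u, v) \<in> E \<Longrightarrow> w u v = w v u"
    and ord_ok: "\<And>k v. v \<in> V \<Longrightarrow> distinct (ord k v) \<and> set (ord k v) = nbrs E v \<times> V"
  shows "\<forall>k \<ge> hopdiam V E w + 1. \<forall>j. \<forall>v \<in> V. \<forall>t \<in> V.
           Sv (state_at V w ord k j v) v t = real (sigma V E w v t)"
proof (intro allI impI ballI)
  fix k j v t
  assume k: "hopdiam V E w + 1 \<le> k" and vV: "v \<in> V" and tV: "t \<in> V"
  interpret sync_run V E w t ord
    by unfold_locales (fact finV EV irrE conn wpos wsym tV ord_ok)+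
  have "maxhop V E w v t \<le> hopdiam V E w" by (rule maxhop_le_hopdiam[OF finV vV tV])
  with k have "maxhop V E w v t < k" by simp
  then show "Sv (state_at V w ord k j v) v t = real (sigma V E w v t)"
    using Sv_state_at_eq_sigma vV by blast
qed

end
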